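(* For every $m\ge0$ and $n\ge1$ there is an injective map from $Q_4(m,n)$ to $P_4(-m,n)$.
   Context: Partitions: $\lambda_1\ge\cdots\ge\lambda_\ell>0$, $\ell(\lambda)=\ell$, $\lambda_i=0$ for $i>\ell$, $s(\lambda)$ the smallest part with $s(\emptyset)=+\infty$. Rank $=\lambda_1-\ell$; rank-set $=[-\lambda_1,1-\lambda_2,\dots,\ell-1-\lambda_\ell,\ell,\ell+1,\dots]$. $Q(m,n)$: partitions of $n$ whose rank-set contains $m$; $P(-m,n)$: partitions of $n$ with rank $\ge-m$. $m$-Durfee rectangle symbol $(\alpha,\beta)_{(m+j)\times j}$ of $\lambda$: $j\ge0$ is the largest integer with $\lambda_{m+j}\ge j$; $\alpha$ is the conjugate of $(\lambda_1-j,\dots,\lambda_{m+j}-j)$ and $\beta=(\lambda_{m+j+1},\lambda_{m+j+2},\dots)$; $|\lambda|=|\alpha|+|\beta|+j(m+j)$. $Q_4(m,n)$ is the set of $\lambda\in Q(m,n)$ whose symbol has $j\ge1$, $\ell(\beta)-\ell(\alpha)\ge1$, $\alpha_1=m+j>\alpha_2$ and $s(\beta)\ge2$. $P_4(-m,n)$ is the set of $\mu\in P(-m,n)$ whose symbol $(\gamma,\delta)_{(m+j')\times j'}$ has $j'\ge1$, $\ell(\gamma)=\ell(\delta)$, $\gamma_1=m+j'-1$, $\delta_1=j'$, and $\delta$ has a part equal to $2$. *)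

theory Defs
  imports Main
begin

definition is_partition :: "nat list \<Rightarrow> bool" where
  "is_partition xs \<longleftrightarrow> sorted_wrt (\<ge>) xs \<and> (\<forall>x\<in>set xs. 0 < x)"

definition partitions_of :: "nat \<Rightarrow> nat list set" where
  "partitions_of n = {xs. is_partition xs \<and> sum_list xs = n}"

text \<open>The i-th part (1-based), with lambda_i = 0 for i > length.\<close>
definition part :: "nat list \<Rightarrow> nat \<Rightarrow> nat" where
  "part xs i = (if 1 \<le> i \<and> i \<le> length xs then xs ! (i - 1) else 0)"

definition rank :: "nat list \<Rightarrow> int" where
  "rank xs = int (part xs 1) - int (length xs)"

text \<open>Membership in the rank-set
  [-lambda_1, 1-lambda_2, ..., l-1-lambda_l, l, l+1, ...].\<close>
definition in_rank_set :: "int \<Rightarrow> nat list \<Rightarrow> bool" where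
  "in_rank_set k xs \<longleftrightarrow>
     (\<exists>i\<in>{1..length xs}. k = int (i - 1) - int (part xs i)) \<or> k \<ge> int (length xs)"

definition Q :: "nat \<Rightarrow> nat \<Rightarrow> nat list set" where
  "Q m n = {xs \<in> partitions_of n. in_rank_set (int m) xs}"

definition P_neg :: "nat \<Rightarrow> nat \<Rightarrow> nat list set" where
  "P_neg m n = {xs \<in> partitions_of n. rank xs \<ge> - int m}"

text \<open>Conjugate of a (not necessarily strictly positive) weakly decreasing list.\<close>
definition conj :: "nat list \<Rightarrow> nat list" where
  "conj xs = filter (\<lambda>c. 0 < c) [length (filter (\<lambda>x. k \<le> x) xs). k \<leftarrow> [1..<sum_list xs + 1]]"

definition durfee_j :: "nat \<Rightarrow> nat list \<Rightarrow> nat" where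
  "durfee_j m xs = (GREATEST j. j = 0 \<or> part xs (m + j) \<ge> j)"

definition durfee_alpha :: "nat \<Rightarrow> nat list \<Rightarrow> nat list" where
  "durfee_alpha m xs = (let j = durfee_j m xs in
     conj (map (\<lambda>i. part xs i - j) [1..<m + j + 1]))"

definition durfee_beta :: "nat \<Rightarrow> nat list \<Rightarrow> nat list" where
  "durfee_beta m xs = drop (m + durfee_j m xs) xs"

definition Q4 :: "nat \<Rightarrow> nat \<Rightarrow> nat list set" where
  "Q4 m n = {xs \<in> Q m n.
     (let j = durfee_j m xs; a = durfee_alpha m xs; b = durfee_beta m xs in
       j \<ge> 1 \<and> int (length b) - int (length a) \<ge> 1 \<and>
       part a 1 = m + j \<and> m + j > part a 2 \<and>
       (\<forall>x\<in>set b. x \<ge> 2))}"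

definition P4 :: "nat \<Rightarrow> nat \<Rightarrow> nat list set" where
  "P4 m n = {xs \<in> P_neg m n.
     (let j = durfee_j m xs; g = durfee_alpha m xs; d = durfee_beta m xs in
       j \<ge> 1 \<and> length g = length d \<and>
       part g 1 = m + j - 1 \<and> part d 1 = j \<and> 2 \<in> set d)}"

end

theory Submission
  imports Defs
begin

(*
  A partition in Q4(m,n) whose m-Durfee rectangle has width j splits as (X + j) @ [j + 1, j] @ B:
  the conditions on alpha force the m + j - 1 parts above the corner to exceed j and the corner
  part to be j + 1, the rank-set condition forces the next part to be j, and the parts of B lie
  in [2, j].  Record B by its column profile Y, Y ! (k - 2) = 1 + #{b in B. k <= b} for
  2 <= k <= j; then X ! 0 = length alpha <= length B < Y ! 0.

  Cut at the first p >= 1 with Y ! p <= X ! (p - 1) (or p = j - 1) and exchange the prefixes of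
  length p: R = take p Y @ drop p X and Z = take p X @ drop p Y are again weakly decreasing.  The
  image is (R + j) @ [j, j] @ F, where F is the partition whose columns have heights
  Y ! 0 - 1, Z ! 0, Z ! 1 - 1, ..., Z ! (j - 2) - 1.  Its symbol has gamma_1 = m + j - 1 and
  length gamma = Y ! 0 = length delta, and delta = j # F contains 2: either j = 2, or F has
  Z ! 0 - (Z ! 1 - 1) > 0 parts equal to 2.

  Everything is invertible once the cut is known, and the cut is determined by R and Z: if two
  preimages had cuts p < q, the second would satisfy X' ! (p - 1) < Y' ! p = X ! p <= X ! (p - 1)
  = X' ! (p - 1).
*)

definition count_ge :: "nat list \<Rightarrow> nat \<Rightarrow> nat" where
  "count_ge xs k = length (filter (\<lambda>x. k \<le> x) xs)"

lemma count_ge_Cons: "count_ge (x # xs) k = (if k \<le> x then Suc (count_ge xs k) else count_ge xs k)"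
  by (simp add: count_ge_def)

lemma count_ge_append: "count_ge (xs @ ys) k = count_ge xs k + count_ge ys k"
  by (simp add: count_ge_def)

lemma count_ge_map_Suc: "count_ge (map Suc xs) (Suc k) = count_ge xs k"
  by (induction xs) (auto simp: count_ge_def)

lemma count_ge_replicate: "count_ge (replicate n x) k = (if k \<le> x then n else 0)"
  by (induction n) (auto simp: count_ge_def)

lemma count_ge_antimono: "k \<le> k' \<Longrightarrow> count_ge xs k' \<le> count_ge xs k"
  by (induction xs) (auto simp: count_ge_def)

lemma count_ge_eq_length: "\<forall>x\<in>set xs. k \<le> x \<Longrightarrow> count_ge xs k = length xs"
  by (simp add: count_ge_def)

lemma count_ge_eq_0: "\<forall>x\<in>set xs. x < k \<Longrightarrow> count_ge xs k = 0"
  by (auto simp: count_ge_def filter_empty_conv)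

lemma count_ge_eq_lengthD: "count_ge xs k = length xs \<Longrightarrow> x \<in> set xs \<Longrightarrow> k \<le> x"
  unfolding count_ge_def using length_filter_less[of x xs "\<lambda>x. k \<le> x"] by force

lemma count_ge_less_lengthD: "count_ge xs k < length xs \<Longrightarrow> \<exists>x\<in>set xs. x < k"
  unfolding count_ge_def by (metis filter_True length_filter_le not_le_imp_less order.strict_iff_not)

lemma two_in_set_if_count_ge: "count_ge xs 3 < count_ge xs 2 \<Longrightarrow> 2 \<in> set xs"
  by (induction xs) (auto simp: count_ge_def split: if_splits)

lemma sum_list_eq_sum_count_ge:
  "\<forall>x\<in>set xs. x \<le> k \<Longrightarrow> sum_list xs = sum_list (map (count_ge xs) [1..<k+1])"
proof (induction xs)
  case (Cons a xs)
  have indicator_sum: "sum_list (map (\<lambda>i. if i \<le> a then 1 else 0) [1..<k+1]) = min a k"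
    for k by (induction k) auto
  have split: "map (count_ge (a # xs)) [1..<k+1] = map (\<lambda>i. (if i \<le> a then 1 else 0) + count_ge xs i) [1..<k+1]"
    by (simp add: count_ge_Cons)
  have "sum_list (map (count_ge (a # xs)) [1..<k+1]) =
        sum_list (map (\<lambda>i. if i \<le> a then 1 else 0) [1..<k+1]) + sum_list (map (count_ge xs) [1..<k+1])"
    unfolding split by (simp add: sum_list_addf del: upt_Suc)
  then show ?case using Cons indicator_sum[of k] by simp
qed (simp add: count_ge_def)

lemma sorted_eq_if_count_ge_eq:
  fixes xs ys :: "nat list"
  assumes "sorted_wrt (\<ge>) xs" "sorted_wrt (\<ge>) ys" "\<forall>x\<in>set xs. 1 \<le> x" "\<forall>y\<in>set ys. 1 \<le> y"
    and "\<And>k. 1 \<le> k \<Longrightarrow> count_ge xs k = count_ge ys k"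
  shows "xs = ys"
  using assms
proof (induction xs arbitrary: ys)
  case Nil
  then show ?case using Nil(5)[of 1] by (auto simp: count_ge_def filter_empty_conv)
next
  case (Cons a xs)
  have top: "count_ge (c # zs) k = 0" if "sorted_wrt (\<ge>) (c # zs)" "c < k" for c zs k
    using that by (auto simp: count_ge_def filter_empty_conv)
  obtain b ys' where ys: "ys = b # ys'"
    using Cons(6)[of 1] Cons(4) by (cases ys) (auto simp: count_ge_def)
  have "a = b"
  proof (rule ccontr)
    assume "a \<noteq> b"
    then consider "a < b" | "b < a" by linarith
    then show False
    proof cases
      case 1
      then show False using Cons(6)[of b] top[OF Cons(2)] by (simp add: ys count_ge_Cons)
    next
      case 2
      then show False using Cons(6)[of a] Cons(3,4) top[of b ys' a] by (simp add: ys count_ge_Cons)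
    qed
  qed
  moreover have "xs = ys'"
  proof (rule Cons.IH)
    show "count_ge xs k = count_ge ys' k" if "1 \<le> k" for k
      using Cons(6)[OF that] \<open>a = b\<close> by (simp add: ys count_ge_Cons split: if_splits)
  qed (use Cons.prems in \<open>auto simp: ys\<close>)
  ultimately show ?case by (simp add: ys)
qed

lemma conj_eq_map_count_ge:
  assumes "\<forall>y\<in>set ys. y \<le> M" and "M \<in> set ys \<or> M = 0"
  shows "conj ys = map (count_ge ys) [1..<M+1]"
proof -
  have "M \<le> sum_list ys" using assms(2) member_le_sum_list by auto
  then have split: "[1..<sum_list ys + 1] = [1..<M+1] @ [M+1..<sum_list ys + 1]"
    using upt_add_eq_append[of 1 "M+1" "sum_list ys - M"] by auto
  have "0 < count_ge ys k" if "1 \<le> k" "k \<le> M" for k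
  proof -
    have "M \<in> set (filter (\<lambda>x. k \<le> x) ys)" using that assms(2) by auto
    then show ?thesis unfolding count_ge_def by (rule length_pos_if_in_set)
  qed
  moreover have "count_ge ys k = 0" if "M < k" for k
    using that assms(1) by (intro count_ge_eq_0) auto
  ultimately show ?thesis
    unfolding conj_def count_ge_def[symmetric] split by (auto simp: filter_empty_conv)
qed

lemma part_1_le_if_sorted_Cons: "sorted_wrt (\<ge>) (a # xs) \<Longrightarrow> part xs 1 \<le> a"
  by (cases xs) (auto simp: part_def)

lemma sorted_ge_nth_mono:
  fixes xs :: "nat list"
  assumes "sorted_wrt (\<ge>) xs" "i \<le> k" "k < length xs"
  shows "xs ! k \<le> xs ! i"
  using assms sorted_wrt_nth_less[of "(\<ge>)" xs i k] by (cases "i = k") auto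

lemma part_antimono:
  assumes "sorted_wrt (\<ge>) xs" "1 \<le> i" "i \<le> k"
  shows "part xs k \<le> part xs i"
  using assms sorted_ge_nth_mono[OF assms(1), of "i - 1" "k - 1"] by (auto simp: part_def)

lemma map_part_upt_eq_take:
  "N \<le> length xs \<Longrightarrow> map (\<lambda>i. part xs i - j) [1..<N+1] = map (\<lambda>x. x - j) (take N xs)"
  by (rule nth_equalityI) (auto simp: part_def simp del: upt_Suc)

lemma part_map_upt: "1 \<le> k \<Longrightarrow> k \<le> M \<Longrightarrow> part (map f [1..<M+1]) k = f k"
  by (simp add: part_def del: upt_Suc)

section \<open>Partitions with prescribed column heights\<close>

fun from_columns :: "nat list \<Rightarrow> nat list" where
  "from_columns [] = []"
| "from_columns (c # cs) = map Suc (from_columns cs) @ replicate (c - part cs 1) 1"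

lemma length_from_columns: "sorted_wrt (\<ge>) cs \<Longrightarrow> length (from_columns cs) = part cs 1"
proof (induction cs)
  case (Cons c cs)
  then show ?case using part_1_le_if_sorted_Cons[OF Cons.prems] by (simp add: part_def)
qed (simp add: part_def)

lemma sum_list_from_columns: "sorted_wrt (\<ge>) cs \<Longrightarrow> sum_list (from_columns cs) = sum_list cs"
proof (induction cs)
  case (Cons c cs)
  have "sum_list (map Suc xs) = sum_list xs + length xs" for xs :: "nat list"
    by (induction xs) auto
  then show ?case
    using Cons length_from_columns[of cs] part_1_le_if_sorted_Cons[OF Cons.prems]
    by (simp add: sum_list_replicate)
qed simp

lemma set_from_columns: "x \<in> set (from_columns cs) \<Longrightarrow> 1 \<le> x \<and> x \<le> length cs"
  by (induction cs arbitrary: x) (auto split: if_splits)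

lemma sorted_from_columns: "sorted_wrt (\<ge>) (from_columns cs)"
proof (induction cs)
  case (Cons c cs)
  have "sorted_wrt (\<ge>) (replicate n (1::nat))" for n
    by (simp add: sorted_wrt_iff_nth_less)
  with Cons show ?case by (auto simp: sorted_wrt_append sorted_wrt_map)
qed simp

lemma count_ge_from_columns:
  "sorted_wrt (\<ge>) cs \<Longrightarrow> 1 \<le> k \<Longrightarrow> k \<le> length cs \<Longrightarrow> count_ge (from_columns cs) k = cs ! (k - 1)"
proof (induction cs arbitrary: k)
  case (Cons c cs)
  have sorted: "sorted_wrt (\<ge>) cs" using Cons.prems(1) by simp
  show ?case
  proof (cases k)
    case (Suc k')
    show ?thesis
    proof (cases k')
      case 0
      then show ?thesis
        using Suc length_from_columns[OF sorted] part_1_le_if_sorted_Cons[OF Cons.prems(1)]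
        by (simp add: count_ge_append count_ge_replicate count_ge_def)
    next
      case (Suc k'')
      then show ?thesis
        using \<open>k = Suc k'\<close> Cons.IH[OF sorted, of k'] Cons.prems
        by (simp add: count_ge_append count_ge_replicate count_ge_map_Suc)
    qed
  qed (use Cons.prems in simp)
qed simp

lemma from_columns_inj:
  assumes "sorted_wrt (\<ge>) cs" "sorted_wrt (\<ge>) ds" "length cs = length ds"
    and "from_columns cs = from_columns ds"
  shows "cs = ds"
proof (rule nth_equalityI)
  fix i assume "i < length cs"
  then show "cs ! i = ds ! i"
    using assms count_ge_from_columns[of cs "Suc i"] count_ge_from_columns[of ds "Suc i"] by simp
qed (use assms in simp)

section \<open>The m-Durfee rectangle\<close>

lemma durfee_j_bound: "j = 0 \<or> j \<le> part xs (m + j) \<Longrightarrow> j \<le> length xs"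
  by (auto simp: part_def split: if_splits)

lemma durfee_j_le_part: "durfee_j m xs = 0 \<or> durfee_j m xs \<le> part xs (m + durfee_j m xs)"
  unfolding durfee_j_def by (rule GreatestI_nat[of _ 0 "length xs"]) (use durfee_j_bound in blast)+

lemma part_less_Suc_durfee_j: "part xs (m + Suc (durfee_j m xs)) < Suc (durfee_j m xs)"
proof (rule ccontr)
  let ?P = "\<lambda>j. j = 0 \<or> j \<le> part xs (m + j)"
  assume "\<not> ?thesis"
  then have "?P (Suc (durfee_j m xs))" by simp
  then have "Suc (durfee_j m xs) \<le> durfee_j m xs"
    unfolding durfee_j_def by (rule Greatest_le_nat[of ?P _ "length xs"]) (use durfee_j_bound in blast)
  then show False by simp
qed

lemma durfee_j_eqI:
  assumes "sorted_wrt (\<ge>) xs" "j \<le> part xs (m + j)" "part xs (m + j + 1) < j + 1"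
  shows "durfee_j m xs = j"
  unfolding durfee_j_def
proof (rule Greatest_equality)
  fix y assume y: "y = 0 \<or> y \<le> part xs (m + y)"
  show "y \<le> j"
  proof (rule ccontr)
    assume "\<not> y \<le> j"
    then have "part xs (m + y) \<le> part xs (m + j + 1)"
      using part_antimono[OF assms(1), of "m + j + 1" "m + y"] by simp
    then show False using y assms(3) \<open>\<not> y \<le> j\<close> by auto
  qed
qed (use assms(2) in simp)

lemma durfee_alpha_eq:
  assumes "sorted_wrt (\<ge>) xs" "1 \<le> m + durfee_j m xs" "m + durfee_j m xs \<le> length xs"
  defines "j \<equiv> durfee_j m xs"
  shows "durfee_alpha m xs = map (count_ge (map (\<lambda>x. x - j) (take (m + j) xs))) [1..<xs ! 0 - j + 1]"
proof -
  let ?ys = "map (\<lambda>x. x - j) (take (m + j) xs)"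
  have N: "1 \<le> m + j" "m + j \<le> length xs" using assms(2,3) unfolding j_def .
  have "y \<le> xs ! 0 - j" if y: "y \<in> set ?ys" for y
  proof -
    obtain i where "i < m + j" "y = xs ! i - j" using y N by (auto simp: in_set_conv_nth)
    moreover have "xs ! i \<le> xs ! 0" using sorted_ge_nth_mono[OF assms(1), of 0 i] calculation N by simp
    ultimately show ?thesis by simp
  qed
  moreover have "xs ! 0 - j \<in> set ?ys"
  proof -
    have pos: "0 < m + j" "0 < length ?ys" using N by auto
    from nth_mem[OF pos(2)] show ?thesis using pos(1) N(2) by (simp del: set_map)
  qed
  ultimately have "conj ?ys = map (count_ge ?ys) [1..<xs ! 0 - j + 1]"
    by (intro conj_eq_map_count_ge) auto
  then show ?thesis
    unfolding durfee_alpha_def Let_def j_def[symmetric] map_part_upt_eq_take[OF N(2)] .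
qed

section \<open>Exchanging prefixes at the cut\<close>

definition cut_index :: "nat \<Rightarrow> nat list \<Rightarrow> nat list \<Rightarrow> nat" where
  "cut_index j X Y = (LEAST q. 1 \<le> q \<and> (q = j - 1 \<or> Y ! q \<le> X ! (q - 1)))"

definition swap_upper :: "nat \<Rightarrow> nat list \<Rightarrow> nat list \<Rightarrow> nat list" where
  "swap_upper j X Y = take (cut_index j X Y) Y @ drop (cut_index j X Y) X"

definition swap_lower :: "nat \<Rightarrow> nat list \<Rightarrow> nat list \<Rightarrow> nat list" where
  "swap_lower j X Y = take (cut_index j X Y) X @ drop (cut_index j X Y) Y"

definition new_columns :: "nat \<Rightarrow> nat list \<Rightarrow> nat list \<Rightarrow> nat list" where
  "new_columns j X Y =
     (hd Y - 1) # hd (swap_lower j X Y) # map (\<lambda>z. z - 1) (tl (swap_lower j X Y))"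

definition swappable :: "nat \<Rightarrow> nat list \<Rightarrow> nat list \<Rightarrow> bool" where
  "swappable j X Y \<longleftrightarrow> 2 \<le> j \<and> length Y = j - 1 \<and> j - 1 \<le> length X \<and>
     sorted_wrt (\<ge>) X \<and> sorted_wrt (\<ge>) Y \<and> (\<forall>x\<in>set X. 1 \<le> x) \<and> (\<forall>y\<in>set Y. 1 \<le> y) \<and>
     X ! 0 < Y ! 0"

lemma
  assumes "2 \<le> j"
  shows cut_index_ge_1: "1 \<le> cut_index j X Y"
    and cut_index_le: "cut_index j X Y \<le> j - 1"
    and cut_index_fits: "cut_index j X Y = j - 1 \<or> Y ! cut_index j X Y \<le> X ! (cut_index j X Y - 1)"
    and less_before_cut_index: "\<And>q. 1 \<le> q \<Longrightarrow> q < cut_index j X Y \<Longrightarrow> X ! (q - 1) < Y ! q"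
proof -
  let ?P = "\<lambda>q. 1 \<le> q \<and> (q = j - 1 \<or> Y ! q \<le> X ! (q - 1))"
  have P: "?P (j - 1)" using assms by simp
  have "?P (cut_index j X Y)" unfolding cut_index_def by (rule LeastI[of ?P, OF P])
  then show "1 \<le> cut_index j X Y" "cut_index j X Y = j - 1 \<or> Y ! cut_index j X Y \<le> X ! (cut_index j X Y - 1)"
    by auto
  show le: "cut_index j X Y \<le> j - 1" unfolding cut_index_def by (rule Least_le[of ?P, OF P])
  fix q assume "1 \<le> q" "q < cut_index j X Y"
  then show "X ! (q - 1) < Y ! q"
    using not_less_Least[of q ?P] le unfolding cut_index_def by auto
qed

lemma sorted_take_append_drop:
  fixes A B :: "nat list"
  assumes "sorted_wrt (\<ge>) A" "sorted_wrt (\<ge>) B" "1 \<le> p" "p \<le> length A"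
    and "p < length B \<Longrightarrow> B ! p \<le> A ! (p - 1)"
  shows "sorted_wrt (\<ge>) (take p A @ drop p B)"
proof -
  have "b \<le> a" if a: "a \<in> set (take p A)" and b: "b \<in> set (drop p B)" for a b
  proof -
    obtain i where i: "i < p" "a = A ! i" using a assms(4) by (auto simp: in_set_conv_nth)
    obtain k where k: "k < length B - p" "b = B ! (p + k)" using b by (auto simp: in_set_conv_nth)
    have "A ! (p - 1) \<le> a" using sorted_ge_nth_mono[OF assms(1), of i "p - 1"] i assms(4) by simp
    moreover have "b \<le> B ! p" using sorted_ge_nth_mono[OF assms(2), of p "p + k"] k by simp
    ultimately show "b \<le> a" using assms(5) k by fastforce
  qed
  then show ?thesis using assms(1,2) by (simp add: sorted_wrt_append sorted_wrt_take sorted_wrt_drop)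
qed

lemma sum_swap_upper_lower: "sum_list (swap_upper j X Y) + sum_list (swap_lower j X Y) = sum_list X + sum_list Y"
proof -
  have "sum_list (take p A) + sum_list (drop p A) = sum_list A" for p and A :: "nat list"
    by (metis append_take_drop_id sum_list_append)
  then show ?thesis unfolding swap_upper_def swap_lower_def sum_list_append by (metis add.commute add.left_commute)
qed

lemma nth_take_append_drop:
  "p \<le> length A \<Longrightarrow> p \<le> length B \<Longrightarrow> (take p A @ drop p B) ! i = (if i < p then A ! i else B ! i)"
  by (auto simp: nth_append min_def)

context
  fixes j :: nat and X Y :: "nat list"
  assumes swappable: "swappable j X Y"
begin

lemma swappableD:
  "2 \<le> j" "length Y = j - 1" "j - 1 \<le> length X" "sorted_wrt (\<ge>) X" "sorted_wrt (\<ge>) Y"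
  "\<forall>x\<in>set X. 1 \<le> x" "\<forall>y\<in>set Y. 1 \<le> y" "X ! 0 < Y ! 0"
  using swappable unfolding swappable_def by auto

lemma cut_index_bounds: "1 \<le> cut_index j X Y" "cut_index j X Y \<le> j - 1"
  using cut_index_ge_1[OF swappableD(1)] cut_index_le[OF swappableD(1)] by auto

lemma X_less_Y_at_cut: "X ! (cut_index j X Y - 1) < Y ! (cut_index j X Y - 1)"
proof -
  let ?p = "cut_index j X Y"
  note j = swappableD(1) and p = cut_index_bounds
  show ?thesis
  proof (cases "?p = 1")
    case False
    then have "X ! (?p - 2) < Y ! (?p - 1)"
      using less_before_cut_index[OF j, of "?p - 1" X Y] p by (simp add: numeral_2_eq_2)
    moreover have "X ! (?p - 1) \<le> X ! (?p - 2)"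
      using sorted_ge_nth_mono[OF swappableD(4), of "?p - 2" "?p - 1"] p swappableD(3) by simp
    ultimately show ?thesis by simp
  qed (use swappableD(8) in simp)
qed

lemma length_swap_upper: "length (swap_upper j X Y) = length X"
  using cut_index_bounds(2) swappableD(2,3) unfolding swap_upper_def by simp

lemma length_swap_lower: "length (swap_lower j X Y) = j - 1"
  using cut_index_bounds(2) swappableD(2,3) unfolding swap_lower_def by simp

lemma hd_swap_upper: "hd (swap_upper j X Y) = hd Y"
  using cut_index_bounds(1) swappableD(1,2)
  unfolding swap_upper_def by (cases Y) (auto simp: hd_append)

lemma hd_swap_lower: "hd (swap_lower j X Y) = X ! 0"
  using cut_index_bounds(1) swappableD(1,3)
  unfolding swap_lower_def by (cases X) (auto simp: hd_append)

lemma sorted_swap_upper: "sorted_wrt (\<ge>) (swap_upper j X Y)"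
  unfolding swap_upper_def
proof (rule sorted_take_append_drop[OF swappableD(5,4) cut_index_bounds(1)])
  let ?p = "cut_index j X Y"
  show "?p \<le> length Y" using cut_index_bounds(2) swappableD(2) by simp
  assume "?p < length X"
  then have "X ! ?p \<le> X ! (?p - 1)" using sorted_ge_nth_mono[OF swappableD(4), of "?p - 1" ?p] by simp
  then show "X ! ?p \<le> Y ! (?p - 1)" using X_less_Y_at_cut by simp
qed

lemma sorted_swap_lower: "sorted_wrt (\<ge>) (swap_lower j X Y)"
  unfolding swap_lower_def
proof (rule sorted_take_append_drop[OF swappableD(4,5) cut_index_bounds(1)])
  show "cut_index j X Y \<le> length X" using cut_index_bounds(2) swappableD(3) by simp
  show "Y ! cut_index j X Y \<le> X ! (cut_index j X Y - 1)" if "cut_index j X Y < length Y"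
    using that cut_index_fits[OF swappableD(1), of X Y] swappableD(2) by auto
qed

lemma swap_upper_pos: "\<forall>x\<in>set (swap_upper j X Y). 1 \<le> x"
  using swappableD(6,7) unfolding swap_upper_def by (auto dest: in_set_takeD in_set_dropD)

lemma swap_lower_pos: "\<forall>x\<in>set (swap_lower j X Y). 1 \<le> x"
  using swappableD(6,7) unfolding swap_lower_def by (auto dest: in_set_takeD in_set_dropD)

lemma length_new_columns: "length (new_columns j X Y) = j"
  using length_swap_lower swappableD(1) unfolding new_columns_def by simp

lemma sorted_new_columns: "sorted_wrt (\<ge>) (new_columns j X Y)"
proof -
  let ?Z = "swap_lower j X Y"
  have "?Z \<noteq> []" using length_swap_lower swappableD(1) by auto
  then have Z: "sorted_wrt (\<ge>) (hd ?Z # tl ?Z)" using sorted_swap_lower by simp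
  have tl: "sorted_wrt (\<ge>) (map (\<lambda>z. z - 1) (tl ?Z))"
    unfolding sorted_wrt_map by (rule sorted_wrt_mono_rel[of _ "(\<ge>)"]) (use Z in auto)
  have "hd ?Z \<le> hd Y - 1"
    using hd_swap_lower swappableD(1,2,8) by (cases Y) auto
  with Z tl show ?thesis unfolding new_columns_def by auto
qed

lemma hd_new_columns: "hd (new_columns j X Y) = hd Y - 1"
  by (simp add: new_columns_def)

lemma new_columns_strict_at_2: "3 \<le> j \<Longrightarrow> new_columns j X Y ! 2 < new_columns j X Y ! 1"
proof -
  let ?Z = "swap_lower j X Y"
  assume "3 \<le> j"
  then have "2 \<le> length ?Z" using length_swap_lower by simp
  then obtain a b Z' where Z: "?Z = a # b # Z'" by (auto simp: numeral_2_eq_2 Suc_le_length_iff)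
  then have "b \<le> a" "1 \<le> b" using sorted_swap_lower swap_lower_pos by auto
  then show ?thesis by (simp add: new_columns_def Z numeral_2_eq_2)
qed

lemma sum_new_columns: "sum_list (new_columns j X Y) + (j - 2) = hd Y - 1 + sum_list (swap_lower j X Y)"
proof -
  let ?Z = "swap_lower j X Y"
  have minus_1: "sum_list (map (\<lambda>z. z - 1) zs) + length zs = sum_list zs" if "\<forall>z\<in>set zs. 1 \<le> z" for zs
    using that by (induction zs) auto
  have "?Z \<noteq> []" "length (tl ?Z) = j - 2" using length_swap_lower swappableD(1) by auto
  then show ?thesis
    using minus_1[of "tl ?Z"] swap_lower_pos by (cases ?Z) (auto simp: new_columns_def)
qed

end

lemma swap_lower_eq_if_new_columns_eq:
  assumes sw1: "swappable j X1 Y1" and sw2: "swappable j X2 Y2"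
    and columns: "new_columns j X1 Y1 = new_columns j X2 Y2"
  shows "swap_lower j X1 Y1 = swap_lower j X2 Y2"
proof -
  let ?Z1 = "swap_lower j X1 Y1" and ?Z2 = "swap_lower j X2 Y2"
  have restore: "map (\<lambda>z. z + 1) (map (\<lambda>z. z - 1) (tl (swap_lower j X Y))) = tl (swap_lower j X Y)"
    if "swappable j X Y" for X Y
    using swap_lower_pos[OF that] by (cases "swap_lower j X Y") (auto intro!: map_idI)
  have ne: "swap_lower j X Y \<noteq> []" if "swappable j X Y" for X Y
    using length_swap_lower[OF that] swappableD(1)[OF that] by auto
  have "hd ?Z1 = hd ?Z2" "map (\<lambda>z. z - 1) (tl ?Z1) = map (\<lambda>z. z - 1) (tl ?Z2)"
    using columns by (simp_all add: new_columns_def)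
  then have "hd ?Z1 = hd ?Z2" "tl ?Z1 = tl ?Z2"
    using restore[OF sw1] restore[OF sw2] by simp_all
  then show ?thesis using ne[OF sw1] ne[OF sw2] list.expand by blast
qed

lemma cut_index_not_less:
  assumes sw1: "swappable j X1 Y1" and sw2: "swappable j X2 Y2"
    and upper: "swap_upper j X1 Y1 = swap_upper j X2 Y2"
    and lower: "swap_lower j X1 Y1 = swap_lower j X2 Y2"
  shows "\<not> cut_index j X1 Y1 < cut_index j X2 Y2"
proof
  let ?p = "cut_index j X1 Y1" and ?q = "cut_index j X2 Y2"
  assume less: "?p < ?q"
  note p = cut_index_bounds[OF sw1] and q = cut_index_bounds[OF sw2]
  note l1 = swappableD(2,3)[OF sw1] and l2 = swappableD(2,3)[OF sw2]
  have "X1 ! ?p = Y2 ! ?p"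
  proof -
    have "swap_upper j X1 Y1 ! ?p = X1 ! ?p" "swap_upper j X2 Y2 ! ?p = Y2 ! ?p"
      unfolding swap_upper_def using p q l1 l2 less by (simp_all add: nth_take_append_drop)
    then show ?thesis using upper by simp
  qed
  moreover have "X1 ! (?p - 1) = X2 ! (?p - 1)"
  proof -
    have "?p - 1 < ?p" "?p - 1 < ?q" using p less by auto
    then have "swap_lower j X1 Y1 ! (?p - 1) = X1 ! (?p - 1)" "swap_lower j X2 Y2 ! (?p - 1) = X2 ! (?p - 1)"
      unfolding swap_lower_def using p q l1 l2 by (simp_all add: nth_take_append_drop)
    then show ?thesis using lower by simp
  qed
  moreover have "X2 ! (?p - 1) < Y2 ! ?p"
    using less_before_cut_index[OF swappableD(1)[OF sw1], of ?p X2 Y2] less p by auto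
  moreover have "X1 ! ?p \<le> X1 ! (?p - 1)"
    using sorted_ge_nth_mono[OF swappableD(4)[OF sw1], of "?p - 1" ?p] p q l1 less by simp
  ultimately show False by simp
qed

lemma swap_inj:
  assumes sw1: "swappable j X1 Y1" and sw2: "swappable j X2 Y2"
    and upper: "swap_upper j X1 Y1 = swap_upper j X2 Y2"
    and columns: "new_columns j X1 Y1 = new_columns j X2 Y2"
  shows "X1 = X2" "Y1 = Y2"
proof -
  define p where "p = cut_index j X1 Y1"
  have lower: "swap_lower j X1 Y1 = swap_lower j X2 Y2"
    using swap_lower_eq_if_new_columns_eq[OF sw1 sw2 columns] .
  have p2: "cut_index j X2 Y2 = p"
    using cut_index_not_less[OF sw1 sw2 upper lower] cut_index_not_less[OF sw2 sw1 upper[symmetric] lower[symmetric]]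
    unfolding p_def by simp
  have p: "p \<le> length Y1" "p \<le> length Y2" "p \<le> length X1" "p \<le> length X2"
    using cut_index_bounds(2)[OF sw1] swappableD(2,3)[OF sw1] swappableD(2,3)[OF sw2] unfolding p_def by auto
  have "take p Y1 @ drop p X1 = take p Y2 @ drop p X2" "take p X1 @ drop p Y1 = take p X2 @ drop p Y2"
    using upper lower p2 unfolding swap_upper_def swap_lower_def p_def by simp_all
  then have "take p Y1 = take p Y2" "drop p X1 = drop p X2" "take p X1 = take p X2" "drop p Y1 = drop p Y2"
    using p by simp_all
  then show "X1 = X2" "Y1 = Y2" by (metis append_take_drop_id)+
qed

section \<open>Column profiles\<close>

definition column_profile :: "nat \<Rightarrow> nat list \<Rightarrow> nat list" where
  "column_profile j B = map (\<lambda>k. Suc (count_ge B k)) [2..<j+1]"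

lemma length_column_profile: "length (column_profile j B) = j - 1"
  by (simp add: column_profile_def del: upt_Suc)

lemma sorted_column_profile: "sorted_wrt (\<ge>) (column_profile j B)"
  unfolding column_profile_def sorted_wrt_map
  by (rule sorted_wrt_mono_rel[OF _ sorted_wrt_upt]) (simp add: count_ge_antimono)

lemma column_profile_pos: "\<forall>y\<in>set (column_profile j B). 1 \<le> y"
  by (simp add: column_profile_def)

lemma nth_column_profile: "2 \<le> k \<Longrightarrow> k \<le> j \<Longrightarrow> column_profile j B ! (k - 2) = Suc (count_ge B k)"
proof -
  assume "2 \<le> k" "k \<le> j"
  then have "k - 2 < length [2..<j+1]" "[2..<j+1] ! (k - 2) = k" by (auto simp del: upt_Suc)
  then show ?thesis by (simp add: column_profile_def del: upt_Suc)
qed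

lemma hd_column_profile:
  "2 \<le> j \<Longrightarrow> \<forall>x\<in>set B. 2 \<le> x \<Longrightarrow> hd (column_profile j B) = Suc (length B)"
  using nth_column_profile[of 2 j B] length_column_profile[of j B] count_ge_eq_length[of B 2]
  by (cases "column_profile j B") auto

lemma sum_column_profile:
  assumes "2 \<le> j" "\<forall>x\<in>set B. 2 \<le> x \<and> x \<le> j"
  shows "sum_list (column_profile j B) + length B = j - 1 + sum_list B"
proof -
  have "[1..<j+1] = 1 # [2..<j+1]" using assms(1) upt_conv_Cons[of 1 "j+1"] by (simp add: numeral_2_eq_2 del: upt_Suc)
  moreover have "count_ge B 1 = length B" using assms(2) by (intro count_ge_eq_length) auto
  ultimately have "sum_list B = length B + sum_list (map (count_ge B) [2..<j+1])"
    using sum_list_eq_sum_count_ge[of B j] assms(2) by simp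
  then show ?thesis unfolding column_profile_def by (simp add: sum_list_Suc del: upt_Suc)
qed

lemma column_profile_inj:
  assumes "sorted_wrt (\<ge>) B1" "sorted_wrt (\<ge>) B2"
    and bounds: "\<forall>x\<in>set B1. 2 \<le> x \<and> x \<le> j" "\<forall>x\<in>set B2. 2 \<le> x \<and> x \<le> j"
    and "column_profile j B1 = column_profile j B2"
  shows "B1 = B2"
proof (rule sorted_eq_if_count_ge_eq[OF assms(1,2)])
  show "\<forall>x\<in>set B1. 1 \<le> x" "\<forall>x\<in>set B2. 1 \<le> x" using bounds by auto
  have mid: "count_ge B1 k = count_ge B2 k" if "2 \<le> k" "k \<le> j" for k
    using assms(5) nth_column_profile[OF that] by (metis Suc_inject)
  have high: "count_ge B k = 0" if "\<forall>x\<in>set B. 2 \<le> x \<and> x \<le> j" "j < k" for B k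
    using that by (intro count_ge_eq_0) auto
  have low: "count_ge B 1 = count_ge B 2" if "\<forall>x\<in>set B. 2 \<le> x \<and> x \<le> j" for B
  proof -
    have "count_ge B 1 = length B" "count_ge B 2 = length B"
      using that by (auto intro!: count_ge_eq_length)
    then show ?thesis by simp
  qed
  have two: "count_ge B1 2 = count_ge B2 2"
    using mid[of 2] high[OF bounds(1), of 2] high[OF bounds(2), of 2] by (cases "2 \<le> j") auto
  fix k :: nat assume "1 \<le> k"
  then consider "k = 1" | "2 \<le> k" "k \<le> j" | "j < k" by linarith
  then show "count_ge B1 k = count_ge B2 k"
  proof cases
    case 1
    then show ?thesis using low[OF bounds(1)] low[OF bounds(2)] two by simp
  next
    case 3
    then show ?thesis using high[OF bounds(1)] high[OF bounds(2)] by simp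
  qed (rule mid)
qed

lemma durfee_j_shifted_rows:
  assumes "2 \<le> j" "length R = m + j - 1" "sorted_wrt (\<ge>) R" "sorted_wrt (\<ge>) F" "\<forall>x\<in>set F. x \<le> j"
  shows "durfee_j m (map (\<lambda>x. x + j) R @ [j, j] @ F) = j"
proof (rule durfee_j_eqI)
  let ?mu = "map (\<lambda>x. x + j) R @ [j, j] @ F"
  show "sorted_wrt (\<ge>) ?mu"
    using assms(3,4,5) by (auto simp: sorted_wrt_append sorted_wrt_map)
  have N: "m + j = Suc (length R)" using assms(1,2) by simp
  show "j \<le> part ?mu (m + j)" "part ?mu (m + j + 1) < j + 1"
    unfolding N by (simp_all add: part_def nth_append)
qed

lemma shifted_rows_in_P4:
  assumes j: "2 \<le> j" and lR: "length R = m + j - 1" and sR: "sorted_wrt (\<ge>) R" and pR: "\<forall>x\<in>set R. 1 \<le> x"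
    and sF: "sorted_wrt (\<ge>) F" and pF: "\<forall>x\<in>set F. 1 \<le> x \<and> x \<le> j"
    and two: "2 \<in> set F \<or> j = 2" and lF: "length F + 1 = hd R"
    and sum: "sum_list (map (\<lambda>x. x + j) R @ [j, j] @ F) = n"
  shows "map (\<lambda>x. x + j) R @ [j, j] @ F \<in> P4 m n"
proof -
  let ?mu = "map (\<lambda>x. x + j) R @ [j, j] @ F"
  have N: "m + j = Suc (length R)" "R \<noteq> []" using j lR by auto
  have sorted: "sorted_wrt (\<ge>) ?mu" using sR sF pF by (auto simp: sorted_wrt_append sorted_wrt_map)
  have durfee: "durfee_j m ?mu = j" using durfee_j_shifted_rows[OF j lR sR sF] pF by simp
  have mu0: "?mu ! 0 - j = hd R" using N(2) by (cases R) auto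
  have ys: "map (\<lambda>x. x - j) (take (m + j) ?mu) = R @ [0]"
    unfolding N(1) by (simp add: comp_def)
  have "1 \<le> m + j" "m + j \<le> length ?mu" using N by auto
  from durfee_alpha_eq[OF sorted, of m, unfolded durfee, OF this]
  have alpha: "durfee_alpha m ?mu = map (count_ge (R @ [0])) [1..<hd R + 1]"
    unfolding ys mu0 .
  have "1 \<le> hd R" using pR N(2) by simp
  then have "part (durfee_alpha m ?mu) 1 = count_ge (R @ [0]) 1"
    unfolding alpha by (rule part_map_upt[OF order_refl])
  also have "\<dots> = m + j - 1"
    using count_ge_eq_length[OF pR] lR by (simp add: count_ge_append count_ge_def)
  finally have "part (durfee_alpha m ?mu) 1 = m + j - 1" .
  moreover have "length (durfee_alpha m ?mu) = length (durfee_beta m ?mu)"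
    using alpha lF unfolding durfee_beta_def durfee N(1) by simp
  moreover have "durfee_beta m ?mu = j # F"
    unfolding durfee_beta_def durfee N(1) by simp
  moreover have "- int m \<le> rank ?mu"
    using lF N unfolding rank_def by (cases R) (auto simp: part_def)
  moreover have "is_partition ?mu"
    unfolding is_partition_def using sorted pF j by auto
  ultimately show ?thesis
    unfolding P4_def P_neg_def partitions_of_def mem_Collect_eq Let_def durfee
    using sum two j by (auto simp: part_def)
qed

definition upper_rows :: "nat \<Rightarrow> nat list \<Rightarrow> nat list" where
  "upper_rows m xs = map (\<lambda>x. x - durfee_j m xs) (take (m + durfee_j m xs - 1) xs)"

definition lower_rows :: "nat \<Rightarrow> nat list \<Rightarrow> nat list" where
  "lower_rows m xs = drop (m + durfee_j m xs + 1) xs"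

definition q4_to_p4 :: "nat \<Rightarrow> nat list \<Rightarrow> nat list" where
  "q4_to_p4 m xs = (let j = durfee_j m xs; X = upper_rows m xs; Y = column_profile j (lower_rows m xs)
     in map (\<lambda>x. x + j) (swap_upper j X Y) @ [j, j] @ from_columns (new_columns j X Y))"

lemma shifted_rows_inj:
  fixes R1 R2 F1 F2 :: "nat list"
  assumes "length R1 = length R2" "map (\<lambda>x. x + j) R1 @ [j, j] @ F1 = map (\<lambda>x. x + j) R2 @ [j, j] @ F2"
  shows "R1 = R2" "F1 = F2"
proof -
  have "map (\<lambda>x. x + j) R1 = map (\<lambda>x. x + j) R2" "F1 = F2" using assms by simp_all
  moreover have "inj (\<lambda>x::nat. x + j)" by (simp add: inj_on_def)
  ultimately show "R1 = R2" "F1 = F2" by (simp_all add: inj_map_eq_map)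
qed

lemma sum_list_shift: "sum_list (map (\<lambda>x. x + j) xs) = sum_list xs + j * length (xs :: nat list)"
  by (induction xs) auto

context
  fixes m n :: nat and xs :: "nat list"
  assumes Q4: "xs \<in> Q4 m n"
begin

lemma Q4D:
  "sorted_wrt (\<ge>) xs" "sum_list xs = n" "in_rank_set (int m) xs" "1 \<le> durfee_j m xs"
  "length (durfee_alpha m xs) < length (durfee_beta m xs)"
  "part (durfee_alpha m xs) 1 = m + durfee_j m xs" "part (durfee_alpha m xs) 2 < m + durfee_j m xs"
  "\<forall>x\<in>set (durfee_beta m xs). 2 \<le> x"
  using Q4 unfolding Q4_def Q_def partitions_of_def is_partition_def Let_def by auto

lemma Q4_durfee_le_length: "m + durfee_j m xs \<le> length xs"
  using durfee_j_le_part[of m xs] Q4D(4) by (auto simp: part_def split: if_splits)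

lemma Q4_durfee_alpha:
  defines "j \<equiv> durfee_j m xs"
  shows "durfee_alpha m xs = map (count_ge (map (\<lambda>x. x - j) (take (m + j) xs))) [1..<xs ! 0 - j + 1]"
  unfolding j_def using durfee_alpha_eq[OF Q4D(1) _ Q4_durfee_le_length] Q4D(4) by simp

lemma Q4_upper_parts: "i < m + durfee_j m xs \<Longrightarrow> durfee_j m xs + 1 \<le> xs ! i"
proof -
  let ?j = "durfee_j m xs"
  let ?ys = "map (\<lambda>x. x - ?j) (take (m + ?j) xs)"
  assume i: "i < m + ?j"
  have "1 \<le> xs ! 0 - ?j"
  proof (rule ccontr)
    assume "\<not> ?thesis"
    then have "durfee_alpha m xs = []" using Q4_durfee_alpha by simp
    then show False using Q4D(4,6) by (simp add: part_def)
  qed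
  then have "count_ge ?ys 1 = length ?ys"
    using Q4D(6) Q4_durfee_alpha Q4_durfee_le_length part_map_upt[of 1] by simp
  moreover have "xs ! i - ?j \<in> set ?ys"
    using i Q4_durfee_le_length by (auto simp: in_set_conv_nth simp del: set_map intro!: exI[of _ i])
  ultimately show ?thesis using count_ge_eq_lengthD by fastforce
qed

lemma Q4_nth_corner: "xs ! (m + durfee_j m xs - 1) = durfee_j m xs + 1"
proof -
  let ?j = "durfee_j m xs"
  let ?ys = "map (\<lambda>x. x - ?j) (take (m + ?j) xs)"
  have last: "xs ! (m + ?j - 1) \<le> xs ! i" if "i < m + ?j" for i
    using sorted_ge_nth_mono[OF Q4D(1), of i "m + ?j - 1"] that Q4_durfee_le_length by simp
  have "xs ! (m + ?j - 1) \<le> ?j + 1"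
  proof (cases "2 \<le> xs ! 0 - ?j")
    case True
    then have "count_ge ?ys 2 < length ?ys"
      using Q4D(7) Q4_durfee_alpha Q4_durfee_le_length part_map_upt[of 2] by simp
    then obtain y where "y \<in> set ?ys" "y < 2" using count_ge_less_lengthD by blast
    then show ?thesis using last Q4_durfee_le_length by (fastforce simp: in_set_conv_nth)
  next
    case False
    then show ?thesis using last[of 0] Q4D(4) by simp
  qed
  then show ?thesis using Q4_upper_parts[of "m + ?j - 1"] Q4D(4) by simp
qed

lemma Q4_length: "xs ! 0 - durfee_j m xs + m + durfee_j m xs + 1 \<le> length xs"
  using Q4D(5) Q4_durfee_alpha Q4_durfee_le_length unfolding durfee_beta_def by (simp del: upt_Suc)

lemma Q4_nth_durfee: "xs ! (m + durfee_j m xs) = durfee_j m xs"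
proof -
  let ?j = "durfee_j m xs"
  have less: "xs ! (m + ?j) < ?j + 1"
    using part_less_Suc_durfee_j[of xs m] Q4_length by (simp add: part_def)
  txt \<open>As m lies in the rank-set, m = (i - 1) - part xs i for some i; parts above the corner are
    too large for this, which pins down the part just below it.\<close>
  have "\<not> int (length xs) \<le> int m" using Q4_length by simp
  then obtain i where i: "1 \<le> i" "i \<le> length xs" "int m = int (i - 1) - int (xs ! (i - 1))"
    using Q4D(3) unfolding in_rank_set_def part_def by auto
  show ?thesis
  proof (cases "i \<le> m + ?j")
    case True
    then show ?thesis using i Q4_upper_parts[of "i - 1"] by linarith
  next
    case False
    then show ?thesis using i less sorted_ge_nth_mono[OF Q4D(1), of "m + ?j" "i - 1"] by linarith
  qed
qed

lemma Q4_lower_parts: "x \<in> set (drop (m + durfee_j m xs) xs) \<Longrightarrow> 2 \<le> x \<and> x \<le> durfee_j m xs"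
proof -
  let ?N = "m + durfee_j m xs"
  assume x: "x \<in> set (drop ?N xs)"
  then obtain k where "k < length xs - ?N" "x = xs ! (?N + k)"
    by (auto simp: in_set_conv_nth)
  then show ?thesis
    using x Q4D(8) Q4_nth_durfee sorted_ge_nth_mono[OF Q4D(1), of ?N "?N + k"]
    unfolding durfee_beta_def by auto
qed

lemma Q4_durfee_ge_2: "2 \<le> durfee_j m xs"
proof -
  let ?N = "m + durfee_j m xs"
  have "?N < length xs" using Q4_length by simp
  then have "xs ! ?N \<in> set (drop ?N xs)" by (simp add: Cons_nth_drop_Suc[symmetric])
  then show ?thesis using Q4_lower_parts Q4_nth_durfee by fastforce
qed

lemma Q4_upper_prefix: "x \<in> set (take (m + durfee_j m xs - 1) xs) \<Longrightarrow> durfee_j m xs + 1 \<le> x"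
proof -
  assume "x \<in> set (take (m + durfee_j m xs - 1) xs)"
  then obtain i where "i < m + durfee_j m xs - 1" "x = xs ! i" by (auto simp: in_set_conv_nth)
  then show ?thesis using Q4_upper_parts[of i] by simp
qed

lemma length_upper_rows: "length (upper_rows m xs) = m + durfee_j m xs - 1"
  using Q4_durfee_le_length by (simp add: upper_rows_def)

lemma Q4_decomp:
  "xs = map (\<lambda>x. x + durfee_j m xs) (upper_rows m xs) @ [durfee_j m xs + 1, durfee_j m xs] @ lower_rows m xs"
proof -
  let ?j = "durfee_j m xs"
  let ?N = "m + ?j"
  have N: "Suc (?N - 1) = ?N" "?N < length xs" using Q4_durfee_ge_2 Q4_length by auto
  have "map (\<lambda>x. x + ?j) (upper_rows m xs) = take (?N - 1) xs"
    unfolding upper_rows_def map_map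
  proof (rule map_idI)
    fix x assume "x \<in> set (take (?N - 1) xs)"
    from Q4_upper_prefix[OF this] show "((\<lambda>x. x + ?j) \<circ> (\<lambda>x. x - ?j)) x = x" by simp
  qed
  moreover have "drop (?N - 1) xs = [?j + 1, ?j] @ lower_rows m xs"
    using N Q4_nth_corner Q4_nth_durfee Cons_nth_drop_Suc[of "?N - 1" xs] Cons_nth_drop_Suc[of ?N xs]
    unfolding lower_rows_def by simp
  ultimately show ?thesis by (metis append_take_drop_id)
qed

lemma lower_rows_bounds: "\<forall>x\<in>set (lower_rows m xs). 2 \<le> x \<and> x \<le> durfee_j m xs"
  using Q4_lower_parts set_drop_subset_set_drop[of "m + durfee_j m xs" "m + durfee_j m xs + 1" xs]
  unfolding lower_rows_def by auto

lemma sorted_lower_rows: "sorted_wrt (\<ge>) (lower_rows m xs)"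
  using Q4D(1) by (simp add: lower_rows_def)

lemma Q4_swappable:
  "swappable (durfee_j m xs) (upper_rows m xs) (column_profile (durfee_j m xs) (lower_rows m xs))"
proof -
  let ?j = "durfee_j m xs"
  have sorted: "sorted_wrt (\<ge>) (upper_rows m xs)"
    unfolding upper_rows_def using Q4D(1)
    by (intro sorted_wrt_map_mono[of "(\<ge>)"]) (auto intro: sorted_wrt_take)
  have pos: "\<forall>x\<in>set (upper_rows m xs). 1 \<le> x"
    unfolding upper_rows_def using Q4_upper_prefix by fastforce
  have "upper_rows m xs ! 0 = xs ! 0 - ?j"
    using Q4_durfee_ge_2 Q4_durfee_le_length by (simp add: upper_rows_def)
  moreover have "column_profile ?j (lower_rows m xs) ! 0 = Suc (length (lower_rows m xs))"
    using nth_column_profile[of 2 ?j] Q4_durfee_ge_2 lower_rows_bounds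
    by (simp add: count_ge_eq_length)
  ultimately have "upper_rows m xs ! 0 < column_profile ?j (lower_rows m xs) ! 0"
    using Q4_length by (simp add: lower_rows_def)
  then show ?thesis
    unfolding swappable_def
    using Q4_durfee_ge_2 length_upper_rows length_column_profile sorted_column_profile
      column_profile_pos sorted pos by simp
qed

lemma sum_q4_to_p4_parts:
  defines "j \<equiv> durfee_j m xs" and "X \<equiv> upper_rows m xs" and "B \<equiv> lower_rows m xs"
  defines "Y \<equiv> column_profile j B"
  shows "sum_list (swap_upper j X Y) + sum_list (from_columns (new_columns j X Y)) = sum_list X + sum_list B + 1"
proof -
  have sw: "swappable j X Y" using Q4_swappable unfolding j_def X_def B_def Y_def .
  have j: "2 \<le> j" using Q4_durfee_ge_2 unfolding j_def .
  have hd: "hd Y = Suc (length B)"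
    using hd_column_profile[OF j] lower_rows_bounds unfolding Y_def B_def j_def by simp
  have "sum_list Y + length B = j - 1 + sum_list B"
    using sum_column_profile[OF j] lower_rows_bounds unfolding Y_def B_def j_def by simp
  then show ?thesis
    using sum_swap_upper_lower[of j X Y] sum_new_columns[OF sw] hd j
      sum_list_from_columns[OF sorted_new_columns[OF sw]]
    by simp
qed

lemma q4_to_p4_in_P4: "q4_to_p4 m xs \<in> P4 m n"
proof -
  define j X B where "j = durfee_j m xs" and "X = upper_rows m xs" and "B = lower_rows m xs"
  define Y where "Y = column_profile j B"
  define R Fs where "R = swap_upper j X Y" and "Fs = new_columns j X Y"
  have sw: "swappable j X Y" using Q4_swappable unfolding j_def X_def B_def Y_def .
  have j: "2 \<le> j" using Q4_durfee_ge_2 unfolding j_def .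
  have lR: "length R = m + j - 1"
    using length_swap_upper[OF sw] length_upper_rows unfolding R_def X_def j_def by simp
  have sFs: "sorted_wrt (\<ge>) Fs" and lFs: "length Fs = j"
    using sorted_new_columns[OF sw] length_new_columns[OF sw] unfolding Fs_def by auto
  have two: "2 \<in> set (from_columns Fs) \<or> j = 2"
  proof (cases "j = 2")
    case False
    then have "count_ge (from_columns Fs) 3 < count_ge (from_columns Fs) 2"
      using new_columns_strict_at_2[OF sw] count_ge_from_columns[OF sFs] j lFs unfolding Fs_def by simp
    then show ?thesis by (rule disjI1[OF two_in_set_if_count_ge])
  qed simp
  have "length (from_columns Fs) = hd Fs"
    using length_from_columns[OF sFs] lFs j by (cases Fs) (auto simp: part_def)
  moreover have "hd Fs = hd Y - 1" "hd R = hd Y"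
    using hd_new_columns[OF sw] hd_swap_upper[OF sw] unfolding Fs_def R_def by auto
  moreover have "hd Y = Suc (length B)"
    using hd_column_profile[OF j] lower_rows_bounds unfolding Y_def B_def j_def by simp
  ultimately have "length (from_columns Fs) + 1 = hd R" by simp
  moreover have "sum_list (map (\<lambda>x. x + j) R @ [j, j] @ from_columns Fs) = n"
    using sum_q4_to_p4_parts Q4D(2) arg_cong[OF Q4_decomp, of sum_list]
      length_swap_upper[OF sw] unfolding R_def Fs_def Y_def B_def X_def j_def
    by (simp add: sum_list_shift)
  ultimately have "map (\<lambda>x. x + j) R @ [j, j] @ from_columns Fs \<in> P4 m n"
    using sorted_from_columns set_from_columns lFs two
    by (intro shifted_rows_in_P4[OF j lR sorted_swap_upper[OF sw, folded R_def] swap_upper_pos[OF sw, folded R_def]])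
      auto
  then show ?thesis unfolding q4_to_p4_def Let_def R_def Fs_def Y_def B_def X_def j_def .
qed

lemma durfee_j_q4_to_p4: "durfee_j m (q4_to_p4 m xs) = durfee_j m xs"
proof -
  note sw = Q4_swappable
  show ?thesis unfolding q4_to_p4_def Let_def
  proof (rule durfee_j_shifted_rows[OF Q4_durfee_ge_2])
    show "\<forall>x\<in>set (from_columns (new_columns (durfee_j m xs) (upper_rows m xs)
        (column_profile (durfee_j m xs) (lower_rows m xs)))). x \<le> durfee_j m xs"
      using set_from_columns length_new_columns[OF sw] by fastforce
  qed (use length_swap_upper[OF sw] length_upper_rows sorted_swap_upper[OF sw] sorted_from_columns in auto)
qed

end

lemma q4_to_p4_inj:
  assumes Q1: "xs1 \<in> Q4 m n" and Q2: "xs2 \<in> Q4 m n" and eq: "q4_to_p4 m xs1 = q4_to_p4 m xs2"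
  shows "xs1 = xs2"
proof -
  define j where "j = durfee_j m xs1"
  have j2: "durfee_j m xs2 = j"
    using durfee_j_q4_to_p4[OF Q1] durfee_j_q4_to_p4[OF Q2] eq unfolding j_def by simp
  define X1 X2 B1 B2 where "X1 = upper_rows m xs1" and "X2 = upper_rows m xs2"
    and "B1 = lower_rows m xs1" and "B2 = lower_rows m xs2"
  define Y1 Y2 where "Y1 = column_profile j B1" and "Y2 = column_profile j B2"
  have sw1: "swappable j X1 Y1" using Q4_swappable[OF Q1] unfolding j_def X1_def Y1_def B1_def .
  have sw2: "swappable j X2 Y2" using Q4_swappable[OF Q2] unfolding j2 X2_def Y2_def B2_def .
  have "length (swap_upper j X1 Y1) = length (swap_upper j X2 Y2)"
    using length_swap_upper[OF sw1] length_swap_upper[OF sw2] length_upper_rows[OF Q1] length_upper_rows[OF Q2]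
    unfolding X1_def X2_def j2 j_def by simp
  moreover have "map (\<lambda>x. x + j) (swap_upper j X1 Y1) @ [j, j] @ from_columns (new_columns j X1 Y1) =
      map (\<lambda>x. x + j) (swap_upper j X2 Y2) @ [j, j] @ from_columns (new_columns j X2 Y2)"
    using eq unfolding q4_to_p4_def Let_def j2 j_def[symmetric] X1_def X2_def Y1_def Y2_def B1_def B2_def .
  ultimately have upper: "swap_upper j X1 Y1 = swap_upper j X2 Y2"
    and "from_columns (new_columns j X1 Y1) = from_columns (new_columns j X2 Y2)"
    by (rule shifted_rows_inj)+
  then have "new_columns j X1 Y1 = new_columns j X2 Y2"
    using from_columns_inj sorted_new_columns[OF sw1] sorted_new_columns[OF sw2]
      length_new_columns[OF sw1] length_new_columns[OF sw2] by simp
  then have X: "X1 = X2" and "Y1 = Y2" using swap_inj[OF sw1 sw2 upper] by auto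
  then have B: "B1 = B2"
    using column_profile_inj sorted_lower_rows[OF Q1] sorted_lower_rows[OF Q2]
      lower_rows_bounds[OF Q1] lower_rows_bounds[OF Q2]
    unfolding Y1_def Y2_def B1_def B2_def j_def j2 by blast
  show ?thesis
    using Q4_decomp[OF Q1] Q4_decomp[OF Q2] X B unfolding X1_def X2_def B1_def B2_def j2 j_def by metis
qed

theorem lemma4p5:
  fixes m n :: nat
  assumes "n \<ge> 1"
  shows "\<exists>f. inj_on f (Q4 m n) \<and> f ` Q4 m n \<subseteq> P4 m n"
proof (intro exI conjI)
  show "inj_on (q4_to_p4 m) (Q4 m n)" by (rule inj_onI) (rule q4_to_p4_inj)
  show "q4_to_p4 m ` Q4 m n \<subseteq> P4 m n" using q4_to_p4_in_P4 by blast
qed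

end
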